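(* Let $E$ be an Archimedean vector lattice and let $F$ be an order dense vector sublattice of $E$. Suppose $F$ has the countable sup property. Then $E$ has the countable sup property in each of the following cases: (a) $F$ is majorizing in $E$; (b) $F$ has a weak unit.
   Context: A sublattice $F$ of $E$ is order dense if for every $x\in E$ with $x>0$ there is $y\in F$ with $0<y\le x$; it is majorizing if for every $x\in E$ there is $y\in F$ with $x\le y$. A vector $e\ge 0$ in $F$ is a weak unit of $F$ if $|x|\wedge e=0$, $x\in F$, implies $x=0$. A vector lattice has the countable sup property if every nonempty subset possessing a supremum contains a countable subset with the same supremum. *)

theory Defs
  imports Complex_Main "HOL-Library.Countable_Set"
begin

class vector_lattice = ordered_real_vector + lattice

definition vl_abs :: "'a::vector_lattice \<Rightarrow> 'a" where
  "vl_abs x = sup x (- x)"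

definition archimedean_vl :: "'a::vector_lattice itself \<Rightarrow> bool" where
  "archimedean_vl _ \<longleftrightarrow>
     (\<forall>x y :: 'a. 0 \<le> x \<and> 0 \<le> y \<and> (\<forall>n::nat. real n *\<^sub>R x \<le> y) \<longrightarrow> x = 0)"

definition vector_sublattice :: "'a::vector_lattice set \<Rightarrow> bool" where
  "vector_sublattice F \<longleftrightarrow> subspace F \<and>
     (\<forall>x\<in>F. \<forall>y\<in>F. sup x y \<in> F \<and> inf x y \<in> F)"

definition order_dense :: "'a::vector_lattice set \<Rightarrow> bool" where
  "order_dense F \<longleftrightarrow> (\<forall>x. 0 < x \<longrightarrow> (\<exists>y\<in>F. 0 < y \<and> y \<le> x))"

definition majorizing :: "'a::vector_lattice set \<Rightarrow> bool" where
  "majorizing F \<longleftrightarrow> (\<forall>x. \<exists>y\<in>F. x \<le> y)"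

text \<open>Weak unit of the vector lattice F (disjointness computed in F, equivalently in E
  since F is a sublattice).\<close>
definition weak_unit_of :: "'a::vector_lattice set \<Rightarrow> 'a \<Rightarrow> bool" where
  "weak_unit_of F e \<longleftrightarrow> e \<in> F \<and> 0 \<le> e \<and>
     (\<forall>x\<in>F. inf (vl_abs x) e = 0 \<longrightarrow> x = 0)"

definition is_sup_in :: "'a::order set \<Rightarrow> 'a set \<Rightarrow> 'a \<Rightarrow> bool" where
  "is_sup_in S A s \<longleftrightarrow> s \<in> S \<and> (\<forall>a\<in>A. a \<le> s) \<and>
     (\<forall>u\<in>S. (\<forall>a\<in>A. a \<le> u) \<longrightarrow> s \<le> u)"

definition countable_sup_property :: "'a::order set \<Rightarrow> bool" where
  "countable_sup_property S \<longleftrightarrow>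
     (\<forall>A s. A \<subseteq> S \<and> A \<noteq> {} \<and> is_sup_in S A s \<longrightarrow>
        (\<exists>B\<subseteq>A. countable B \<and> is_sup_in S B s))"

end

theory Submission
  imports Defs
begin

text \<open>Write \<open>C \<down> 0\<close> for a set \<open>C\<close> of positive vectors with infimum \<open>0\<close>. Since \<open>A\<close> has supremum
  \<open>s\<close> exactly when \<open>s - A \<down> 0\<close>, the countable sup property of \<open>E\<close> asks for a countable
  \<open>C\<^sub>0 \<subseteq> C\<close> with \<open>C\<^sub>0 \<down> 0\<close> whenever \<open>C \<down> 0\<close>. If every element of \<open>C\<close> lies below an element
  of \<open>F\<close>, then the set \<open>D\<close> of all majorants in \<open>F\<close> of elements of \<open>C\<close> satisfies \<open>D \<down> 0\<close>
  (order density and the Archimedean property make every vector the supremum of its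
  positive minorants in \<open>F\<close>); the countable sup property of \<open>F\<close> gives a countable
  \<open>D\<^sub>0 \<subseteq> D\<close> with infimum \<open>0\<close> in \<open>F\<close>, hence in \<open>E\<close>, and elements of \<open>C\<close> below those of \<open>D\<^sub>0\<close>
  form the required \<open>C\<^sub>0\<close>. This settles the majorizing case; with a weak unit \<open>e\<close> one
  applies it to \<open>C \<sqinter> e\<close>, and \<open>C\<^sub>0 \<sqinter> e \<down> 0\<close> forces \<open>C\<^sub>0 \<down> 0\<close> because no positive element of
  \<open>F\<close> is disjoint from \<open>e\<close>.\<close>

definition is_inf_zero :: "'a::ordered_ab_group_add set \<Rightarrow> bool" where
  "is_inf_zero C \<longleftrightarrow> (\<forall>c\<in>C. 0 \<le> c) \<and> (\<forall>l. (\<forall>c\<in>C. l \<le> c) \<longrightarrow> l \<le> 0)"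

lemma is_sup_in_UNIV_iff_is_inf_zero:
  fixes A :: "'a::ordered_ab_group_add set"
  shows "is_sup_in UNIV A s \<longleftrightarrow> is_inf_zero ((\<lambda>a. s - a) ` A)"
proof -
  have "(\<forall>u. (\<forall>a\<in>A. a \<le> u) \<longrightarrow> s \<le> u) \<longleftrightarrow> (\<forall>l. (\<forall>a\<in>A. l \<le> s - a) \<longrightarrow> l \<le> 0)"
  proof (intro iffI allI impI)
    fix l
    assume ub: "\<forall>u. (\<forall>a\<in>A. a \<le> u) \<longrightarrow> s \<le> u" and "\<forall>a\<in>A. l \<le> s - a"
    then have "\<forall>a\<in>A. a \<le> s - l"
      by (simp add: le_diff_eq add.commute)
    then have "s \<le> s - l"
      using ub by blast
    then show "l \<le> 0"
      by simp
  next
    fix u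
    assume lb: "\<forall>l. (\<forall>a\<in>A. l \<le> s - a) \<longrightarrow> l \<le> 0" and "\<forall>a\<in>A. a \<le> u"
    then have "\<forall>a\<in>A. s - u \<le> s - a"
      by simp
    then have "s - u \<le> 0"
      using lb by blast
    then show "s \<le> u"
      by simp
  qed
  then show ?thesis
    by (simp add: is_sup_in_def is_inf_zero_def)
qed

lemma countable_sup_property_UNIV_if_countable_inf_zero:
  assumes "\<And>C :: 'a::ordered_ab_group_add set.
    is_inf_zero C \<Longrightarrow> \<exists>C\<^sub>0\<subseteq>C. countable C\<^sub>0 \<and> is_inf_zero C\<^sub>0"
  shows "countable_sup_property (UNIV :: 'a set)"
  unfolding countable_sup_property_def
proof (intro allI impI)
  fix A :: "'a set" and s :: 'a
  assume "A \<subseteq> UNIV \<and> A \<noteq> {} \<and> is_sup_in UNIV A s"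
  then have "is_inf_zero ((\<lambda>a. s - a) ` A)"
    by (simp add: is_sup_in_UNIV_iff_is_inf_zero)
  then have "\<exists>T. countable T \<and> T \<subseteq> (\<lambda>a. s - a) ` A \<and> is_inf_zero T"
    using assms by blast
  then obtain B where "countable B" "B \<subseteq> A" "is_inf_zero ((\<lambda>a. s - a) ` B)"
    unfolding ex_countable_subset_image by blast
  then show "\<exists>B\<subseteq>A. countable B \<and> is_sup_in UNIV B s"
    by (auto simp: is_sup_in_UNIV_iff_is_inf_zero)
qed

text \<open>An upper bound \<open>u\<close> of \<open>B\<close> with \<open>s \<noteq> s \<sqinter> u\<close> would leave room for some \<open>0 < y \<in> F\<close>
  below \<open>s - s \<sqinter> u\<close>, making \<open>s - y\<close> a smaller upper bound in \<open>F\<close>.\<close>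

lemma is_sup_in_UNIV_if_order_dense:
  fixes F :: "'a::vector_lattice set"
  assumes "subspace F" "order_dense F" "is_sup_in F B s"
  shows "is_sup_in UNIV B s"
  unfolding is_sup_in_def
proof (intro conjI ballI allI impI UNIV_I)
  show "b \<le> s" if "b \<in> B" for b
    using assms(3) that unfolding is_sup_in_def by blast
  fix u
  assume ub: "\<forall>b\<in>B. b \<le> u"
  show "s \<le> u"
  proof (rule ccontr)
    assume "\<not> s \<le> u"
    then have "0 < s - inf s u"
      by (metis diff_gt_0_iff_gt inf.absorb_iff1 inf.cobounded1 order.not_eq_order_implies_strict)
    then obtain y where y: "y \<in> F" "0 < y" "y \<le> s - inf s u"
      using assms(2) unfolding order_dense_def by blast
    have "b \<le> s - y" if "b \<in> B" for b
    proof -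
      have "b \<le> inf s u"
        using that ub assms(3) unfolding is_sup_in_def by simp
      also have "\<dots> \<le> s - y"
        using y(3) by (simp add: le_diff_eq add.commute)
      finally show ?thesis .
    qed
    moreover have "s - y \<in> F"
      using assms(1,3) y(1) unfolding is_sup_in_def by (simp add: real_vector.subspace_diff)
    ultimately have "s \<le> s - y"
      using assms(3) unfolding is_sup_in_def by blast
    then show False
      using y(2) by simp
  qed
qed

text \<open>If \<open>u \<sqinter> x < x\<close>, some \<open>0 < y \<in> F\<close> fits below \<open>x - u \<sqinter> x\<close>, and induction shows that all
  multiples of \<open>y\<close> stay below \<open>x\<close>, contradicting the Archimedean property.\<close>

lemma le_if_order_dense_minorants_le:
  fixes F :: "'a::vector_lattice set"
  assumes arch: "archimedean_vl TYPE('a)" and "subspace F" "order_dense F"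
    and "0 \<le> x" and minorants_le: "\<And>z. z \<in> F \<Longrightarrow> 0 \<le> z \<Longrightarrow> z \<le> x \<Longrightarrow> z \<le> u"
  shows "x \<le> u"
proof (rule ccontr)
  assume "\<not> x \<le> u"
  then have "0 < x - inf u x"
    by (metis diff_gt_0_iff_gt inf.absorb_iff2 inf.cobounded2 order.not_eq_order_implies_strict)
  then obtain y where y: "y \<in> F" "0 < y" "y \<le> x - inf u x"
    using assms(3) unfolding order_dense_def by blast
  have multiple: "real n *\<^sub>R y \<in> F \<and> 0 \<le> real n *\<^sub>R y \<and> real n *\<^sub>R y \<le> x" for n
  proof (induction n)
    case 0
    then show ?case
      using assms(2,4) by (simp add: real_vector.subspace_0)
  next
    case (Suc n)
    then have "real n *\<^sub>R y \<le> inf u x"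
      using minorants_le by simp
    then have "real n *\<^sub>R y + y \<le> inf u x + (x - inf u x)"
      using y(3) by (rule add_mono)
    moreover have "real (Suc n) *\<^sub>R y = real n *\<^sub>R y + y"
      by (simp add: algebra_simps)
    ultimately show ?case
      using Suc y assms(2) by (simp add: real_vector.subspace_add)
  qed
  then have "y = 0"
    using arch multiple y(2) assms(4) unfolding archimedean_vl_def by (meson less_imp_le)
  with y(2) show False
    by simp
qed

lemma le_if_order_dense_majorants_ge:
  fixes F :: "'a::vector_lattice set"
  assumes "archimedean_vl TYPE('a)" "subspace F" "order_dense F"
    and "f \<in> F" "c \<le> f" and majorants_ge: "\<And>y. y \<in> F \<Longrightarrow> c \<le> y \<Longrightarrow> l \<le> y"
  shows "l \<le> c"
proof -
  have "f - c \<le> f - l"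
  proof (rule le_if_order_dense_minorants_le[OF assms(1-3)])
    show "0 \<le> f - c"
      using assms(5) by simp
    fix z
    assume z: "z \<in> F" "0 \<le> z" "z \<le> f - c"
    have "f - z \<in> F"
      using assms(2,4) z(1) by (rule real_vector.subspace_diff)
    moreover have "c \<le> f - z"
      using z(3) by (simp add: le_diff_eq add.commute)
    ultimately have "l \<le> f - z"
      by (rule majorants_ge)
    then show "z \<le> f - l"
      by (simp add: le_diff_eq add.commute)
  qed
  then show ?thesis
    by simp
qed

lemma is_inf_zero_majorants_in_order_dense:
  fixes F :: "'a::vector_lattice set"
  assumes "archimedean_vl TYPE('a)" "subspace F" "order_dense F"
    and C: "is_inf_zero C" and majorized: "\<And>c. c \<in> C \<Longrightarrow> \<exists>f\<in>F. c \<le> f"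
  shows "is_inf_zero {y\<in>F. \<exists>c\<in>C. c \<le> y}"
  unfolding is_inf_zero_def
proof (intro conjI ballI allI impI)
  show "0 \<le> d" if "d \<in> {y\<in>F. \<exists>c\<in>C. c \<le> y}" for d
    using that C unfolding is_inf_zero_def by (blast intro: order_trans)
  fix l
  assume "\<forall>d\<in>{y\<in>F. \<exists>c\<in>C. c \<le> y}. l \<le> d"
  then have "l \<le> c" if "c \<in> C" for c
    using majorized[OF that] le_if_order_dense_majorants_ge[OF assms(1-3)] that by blast
  then show "l \<le> 0"
    using C unfolding is_inf_zero_def by blast
qed

lemma countable_inf_zero_in_order_dense:
  fixes F :: "'a::vector_lattice set"
  assumes sub: "subspace F" and od: "order_dense F" and csp: "countable_sup_property F"
    and "D \<subseteq> F" and D: "is_inf_zero D"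
  shows "\<exists>D\<^sub>0\<subseteq>D. countable D\<^sub>0 \<and> is_inf_zero D\<^sub>0"
proof (cases "D = {}")
  case True
  then show ?thesis
    using D by blast
next
  case False
  have "is_sup_in UNIV (uminus ` D) 0"
    using D is_sup_in_UNIV_iff_is_inf_zero[of "uminus ` D" 0] by (simp add: image_image)
  then have "is_sup_in F (uminus ` D) 0"
    using real_vector.subspace_0[OF sub] unfolding is_sup_in_def by blast
  moreover have "uminus ` D \<subseteq> F"
    using sub \<open>D \<subseteq> F\<close> by (auto simp: real_vector.subspace_neg)
  ultimately have "\<exists>T. countable T \<and> T \<subseteq> uminus ` D \<and> is_sup_in F T 0"
    using csp False unfolding countable_sup_property_def by blast
  then obtain D\<^sub>0 where "countable D\<^sub>0" "D\<^sub>0 \<subseteq> D" "is_sup_in F (uminus ` D\<^sub>0) 0"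
    unfolding ex_countable_subset_image by blast
  moreover from this have "is_inf_zero D\<^sub>0"
    using is_sup_in_UNIV_if_order_dense[OF sub od] is_sup_in_UNIV_iff_is_inf_zero[of "uminus ` D\<^sub>0" 0]
    by (simp add: image_image)
  ultimately show ?thesis
    by blast
qed

lemma countable_inf_zero_if_dominates:
  assumes "countable D" "is_inf_zero D"
    and C: "\<forall>c\<in>C. 0 \<le> c" and dominates: "\<And>d. d \<in> D \<Longrightarrow> \<exists>c\<in>C. c \<le> d"
  shows "\<exists>C\<^sub>0\<subseteq>C. countable C\<^sub>0 \<and> is_inf_zero C\<^sub>0"
proof -
  define below where "below d = (SOME c. c \<in> C \<and> c \<le> d)" for d
  have below: "below d \<in> C \<and> below d \<le> d" if "d \<in> D" for d
    unfolding below_def by (rule someI_ex) (use dominates[OF that] in blast)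
  have "is_inf_zero (below ` D)"
    unfolding is_inf_zero_def
  proof (intro conjI ballI allI impI)
    show "0 \<le> c" if "c \<in> below ` D" for c
      using that below C by blast
    fix l
    assume "\<forall>c\<in>below ` D. l \<le> c"
    then have "\<forall>d\<in>D. l \<le> d"
      using below by (blast intro: order_trans)
    then show "l \<le> 0"
      using \<open>is_inf_zero D\<close> unfolding is_inf_zero_def by blast
  qed
  moreover have "below ` D \<subseteq> C" "countable (below ` D)"
    using below \<open>countable D\<close> by auto
  ultimately show ?thesis
    by blast
qed

lemma countable_inf_zero_if_majorized:
  fixes F :: "'a::vector_lattice set"
  assumes "archimedean_vl TYPE('a)" "subspace F" "order_dense F" "countable_sup_property F"
    and C: "is_inf_zero C" and majorized: "\<And>c. c \<in> C \<Longrightarrow> \<exists>f\<in>F. c \<le> f"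
  shows "\<exists>C\<^sub>0\<subseteq>C. countable C\<^sub>0 \<and> is_inf_zero C\<^sub>0"
proof -
  let ?D = "{y\<in>F. \<exists>c\<in>C. c \<le> y}"
  have "\<exists>D\<^sub>0\<subseteq>?D. countable D\<^sub>0 \<and> is_inf_zero D\<^sub>0"
    using is_inf_zero_majorants_in_order_dense[OF assms(1-3) C majorized]
    by (rule countable_inf_zero_in_order_dense[OF assms(2-4), rotated]) auto
  then obtain D\<^sub>0 where "D\<^sub>0 \<subseteq> ?D" "countable D\<^sub>0" "is_inf_zero D\<^sub>0"
    by blast
  moreover have "\<forall>c\<in>C. 0 \<le> c"
    using C unfolding is_inf_zero_def by blast
  ultimately show ?thesis
    using countable_inf_zero_if_dominates[of D\<^sub>0 C] by blast
qed

lemma is_inf_zero_if_inf_weak_unit: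
  fixes F :: "'a::vector_lattice set"
  assumes od: "order_dense F" and e: "weak_unit_of F e"
    and C: "\<forall>c\<in>C. 0 \<le> c" and Ce: "is_inf_zero ((\<lambda>c. inf c e) ` C)"
  shows "is_inf_zero C"
  unfolding is_inf_zero_def
proof (intro conjI allI impI C)
  fix l
  assume lb: "\<forall>c\<in>C. l \<le> c"
  have "0 \<le> e"
    using e unfolding weak_unit_of_def by blast
  have "inf (sup l 0) e \<le> inf c e" if "c \<in> C" for c
    using lb C that by (meson inf_mono le_supI order_refl)
  then have disjoint: "inf (sup l 0) e = 0"
    using Ce \<open>0 \<le> e\<close> unfolding is_inf_zero_def by (simp add: antisym)
  have "sup l 0 = 0"
  proof (rule ccontr)
    assume "sup l 0 \<noteq> 0"
    then obtain y where y: "y \<in> F" "0 < y" "y \<le> sup l 0"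
      using od unfolding order_dense_def by (metis sup.cobounded2 order.not_eq_order_implies_strict)
    have "vl_abs y = y"
      unfolding vl_abs_def using y(2) by (simp add: sup.absorb1 order_trans[of "- y" 0 y])
    moreover have "inf y e = 0"
      using disjoint y \<open>0 \<le> e\<close> by (metis antisym inf_mono order_refl le_infI less_imp_le)
    ultimately have "y = 0"
      using e y(1) unfolding weak_unit_of_def by simp
    with y(2) show False
      by simp
  qed
  then show "l \<le> 0"
    by (metis sup.cobounded1)
qed

lemma countable_inf_zero_if_weak_unit:
  fixes F C :: "'a::vector_lattice set"
  assumes "archimedean_vl TYPE('a)" "subspace F" "order_dense F" "countable_sup_property F"
    and e: "weak_unit_of F e" and C: "is_inf_zero C"
  shows "\<exists>C\<^sub>0\<subseteq>C. countable C\<^sub>0 \<and> is_inf_zero C\<^sub>0"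
proof -
  have "is_inf_zero ((\<lambda>c. inf c e) ` C)"
    using C e unfolding weak_unit_of_def is_inf_zero_def by (auto intro: order_trans)
  moreover have "\<exists>f\<in>F. c \<le> f" if "c \<in> (\<lambda>c. inf c e) ` C" for c
    using e that unfolding weak_unit_of_def by (metis imageE inf.cobounded2)
  ultimately have "\<exists>T\<subseteq>(\<lambda>c. inf c e) ` C. countable T \<and> is_inf_zero T"
    by (rule countable_inf_zero_if_majorized[OF assms(1-4)])
  then have "\<exists>T. countable T \<and> T \<subseteq> (\<lambda>c. inf c e) ` C \<and> is_inf_zero T"
    by blast
  then obtain C\<^sub>0 where C\<^sub>0: "countable C\<^sub>0" "C\<^sub>0 \<subseteq> C" "is_inf_zero ((\<lambda>c. inf c e) ` C\<^sub>0)"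
    unfolding ex_countable_subset_image by blast
  moreover have "\<forall>c\<in>C\<^sub>0. 0 \<le> c"
    using C C\<^sub>0(2) unfolding is_inf_zero_def by blast
  ultimately show ?thesis
    by (blast intro: is_inf_zero_if_inf_weak_unit[OF assms(3) e])
qed

theorem theorem4p5:
  fixes F :: "'a::vector_lattice set"
  assumes "archimedean_vl TYPE('a)"
    and "vector_sublattice F"
    and "order_dense F"
    and "countable_sup_property F"
    and "majorizing F \<or> (\<exists>e. weak_unit_of F e)"
  shows "countable_sup_property (UNIV :: 'a set)"
proof (rule countable_sup_property_UNIV_if_countable_inf_zero)
  fix C :: "'a set"
  assume C: "is_inf_zero C"
  have sub: "subspace F"
    using assms(2) unfolding vector_sublattice_def by blast
  from assms(5) show "\<exists>C\<^sub>0\<subseteq>C. countable C\<^sub>0 \<and> is_inf_zero C\<^sub>0"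
  proof
    assume "majorizing F"
    then show ?thesis
      using countable_inf_zero_if_majorized[OF assms(1) sub assms(3,4) C]
      unfolding majorizing_def by blast
  next
    assume "\<exists>e. weak_unit_of F e"
    then show ?thesis
      using countable_inf_zero_if_weak_unit[OF assms(1) sub assms(3,4) _ C] by blast
  qed
qed

end
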